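(* Let $\mathcal{D}=\{d_1,\dots,d_n\}$ (data) and $\mathcal{H}=\{h_1,\dots,h_m\}$ (hypotheses) be finite sets. Let $M=(M_{ij})$ be a non-negative $n\times m$ matrix with no zero row and no zero column, let $\mathbf{r}=(r_1,\dots,r_n)$ be a probability vector with all $r_i>0$ (the teacher's prior $P_{T_0}(d_i)=r_i$ on $\mathcal{D}$), and let $\mathbf{c}=(c_1,\dots,c_m)$ be a probability vector with all $c_j>0$ (the learner's prior $P_{L_0}(h_j)=c_j$ on $\mathcal{H}$); these priors are arbitrary. Define the $n\times m$ matrix $\widetilde{L}_0$ by $(\widetilde{L}_0)_{ij}= r_i\, M_{ij}/\sum_{k=1}^m M_{ik}$. Suppose that $(\mathbf{r},\mathbf{c})$-Sinkhorn scaling of $\widetilde{L}_0$ converges, and let $P$ be its limit. Then the conditional communication plans $$T^\star(d_i\mid h_j)=\frac{P_{ij}}{c_j},\qquad L^\star(h_j\mid d_i)=\frac{P_{ij}}{r_i}$$ solve the cooperative inference system, i.e. for all $i,j$, $$L^\star(h_j\mid d_i)=\frac{T^\star(d_i\mid h_j)\,c_j}{\sum_{k=1}^m T^\star(d_i\mid h_k)\,c_k},\qquad T^\star(d_i\mid h_j)=\frac{L^\star(h_j\mid d_i)\,r_i}{\sum_{k=1}^n L^\star(h_j\mid d_k)\,r_k}.$$ In particular, cooperative inference is a special case of entropy-regularized optimal transport with $\lambda=1$: when all entries of $M$ are positive, $P$ is the minimizer over $U(\mathbf{r},\mathbf{c})$ of $\langle C,P'\rangle-\mathrm{h}(P')$,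 where $C_{ij}=-\log\big(M_{ij}/\sum_{k}M_{ik}\big)-\log r_i$.
   Context: $(\mathbf{r},\mathbf{c})$-Sinkhorn scaling of a non-negative matrix $A$ is the iterated alternation of rescaling each row $i$ of $A$ so that its sum equals $r_i$ and rescaling each column $j$ so that its sum equals $c_j$. $U(\mathbf{r},\mathbf{c})$ denotes the set of non-negative $n\times m$ matrices with row sums $\mathbf{r}$ and column sums $\mathbf{c}$. For $P'\in U(\mathbf{r},\mathbf{c})$, $\langle C,P'\rangle=\sum_{i,j}C_{ij}P'_{ij}$ and $\mathrm{h}(P')=-\sum_{i,j}P'_{ij}\log P'_{ij}$ is the Shannon entropy. Entropy-regularized optimal transport with parameter $\lambda>0$ and cost $C$ seeks the minimizer over $U(\mathbf{r},\mathbf{c})$ of $\langle C,P'\rangle-\frac{1}{\lambda}\mathrm{h}(P')$. *)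

theory Defs
  imports "HOL-Analysis.Analysis"
begin

text \<open>Matrices indexed by finite types: rows 'd (data), columns 'h (hypotheses).\<close>

definition row_scale :: "('d::finite \<Rightarrow> real) \<Rightarrow> ('d \<Rightarrow> 'h::finite \<Rightarrow> real) \<Rightarrow> ('d \<Rightarrow> 'h \<Rightarrow> real)" where
  "row_scale r A = (\<lambda>i j. A i j * r i / (\<Sum>k\<in>UNIV. A i k))"

definition col_scale :: "('h::finite \<Rightarrow> real) \<Rightarrow> ('d::finite \<Rightarrow> 'h \<Rightarrow> real) \<Rightarrow> ('d \<Rightarrow> 'h \<Rightarrow> real)" where
  "col_scale c A = (\<lambda>i j. A i j * c j / (\<Sum>k\<in>UNIV. A k j))"

text \<open>The full alternating Sinkhorn sequence: step 0 is A, odd steps rescale rows,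
  even steps (>0) rescale columns.\<close>
fun sinkhorn_seq :: "('d::finite \<Rightarrow> real) \<Rightarrow> ('h::finite \<Rightarrow> real) \<Rightarrow> ('d \<Rightarrow> 'h \<Rightarrow> real) \<Rightarrow> nat \<Rightarrow> ('d \<Rightarrow> 'h \<Rightarrow> real)" where
  "sinkhorn_seq r c A 0 = A"
| "sinkhorn_seq r c A (Suc k) =
     (if even k then row_scale r (sinkhorn_seq r c A k) else col_scale c (sinkhorn_seq r c A k))"

definition sinkhorn_converges_to :: "('d::finite \<Rightarrow> real) \<Rightarrow> ('h::finite \<Rightarrow> real) \<Rightarrow> ('d \<Rightarrow> 'h \<Rightarrow> real) \<Rightarrow> ('d \<Rightarrow> 'h \<Rightarrow> real) \<Rightarrow> bool" where
  "sinkhorn_converges_to r c A P \<longleftrightarrow> (\<forall>i j. (\<lambda>k. sinkhorn_seq r c A k i j) \<longlonglongrightarrow> P i j)"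

definition transport_polytope :: "('d::finite \<Rightarrow> real) \<Rightarrow> ('h::finite \<Rightarrow> real) \<Rightarrow> ('d \<Rightarrow> 'h \<Rightarrow> real) set" ("U") where
  "U r c = {P. (\<forall>i j. P i j \<ge> 0) \<and> (\<forall>i. (\<Sum>j\<in>UNIV. P i j) = r i) \<and> (\<forall>j. (\<Sum>i\<in>UNIV. P i j) = c j)}"

definition frob :: "('d::finite \<Rightarrow> 'h::finite \<Rightarrow> real) \<Rightarrow> ('d \<Rightarrow> 'h \<Rightarrow> real) \<Rightarrow> real" where
  "frob C P = (\<Sum>i\<in>UNIV. \<Sum>j\<in>UNIV. C i j * P i j)"

definition shannon_entropy :: "('d::finite \<Rightarrow> 'h::finite \<Rightarrow> real) \<Rightarrow> real" where
  "shannon_entropy P = - (\<Sum>i\<in>UNIV. \<Sum>j\<in>UNIV. (if P i j = 0 then 0 else P i j * ln (P i j)))"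

end

theory Submission
  imports Defs
begin

text \<open>Every Sinkhorn step multiplies the rows or the columns by positive factors, so each iterate
  has the form \<open>diag u \<cdot> A \<cdot> diag v\<close>. Hence the iterates keep the support of \<open>A\<close> (row and
  column sums never vanish) and its cross-ratios \<open>A i l A k j / (A i j A k l)\<close>. Along the odd and
  the even iterates the row, resp. column, sums are exactly \<open>r\<close>, resp. \<open>c\<close>, so the limit lies in
  \<open>U r c\<close>; for such a plan the cooperative inference equations are just the marginal conditions.
  If \<open>A > 0\<close>, the cross-ratio identity forces the limit to be positive and of Gibbs form
  \<open>exp (a i + b j - C i j)\<close> with \<open>C = - ln A\<close>. By \<open>ln x \<le> x - 1\<close>, the entropic cost of any
  \<open>Q \<in> U r c\<close> exceeds that of the Gibbs plan by at least a linear functional with additive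
  coefficients \<open>a i + b j + 1\<close>, which vanishes on differences of transport plans.\<close>

lemma transport_plan_cooperative_inference:
  assumes P: "P \<in> U r c" and r_pos: "\<And>i. 0 < r i" and c_pos: "\<And>j. 0 < c j"
  shows "P i j / r i = P i j / c j * c j / (\<Sum>k\<in>UNIV. P i k / c k * c k)"
    and "P i j / c j = P i j / r i * r i / (\<Sum>k\<in>UNIV. P k j / r k * r k)"
proof -
  have "(\<Sum>k\<in>UNIV. P i k / c k * c k) = r i" and "(\<Sum>k\<in>UNIV. P k j / r k * r k) = c j"
    using P r_pos c_pos unfolding transport_polytope_def by (simp_all add: less_imp_neq[symmetric])
  then show "P i j / r i = P i j / c j * c j / (\<Sum>k\<in>UNIV. P i k / c k * c k)"
    and "P i j / c j = P i j / r i * r i / (\<Sum>k\<in>UNIV. P k j / r k * r k)"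
    using r_pos[THEN less_imp_neq] c_pos[THEN less_imp_neq] by simp_all
qed

lemma transport_plan_pos_if_cross_ratio:
  assumes P: "P \<in> U r c" and r_pos: "\<And>i. 0 < r i" and c_pos: "\<And>j. 0 < c j"
    and A_pos: "\<And>i j. 0 < A i j"
    and cross: "\<And>i j k l. P i j * P k l * A i l * A k j = P i l * P k j * A i j * A k l"
  shows "0 < P i j"
proof (rule ccontr)
  assume "\<not> 0 < P i j"
  moreover have "0 \<le> P i j" using P unfolding transport_polytope_def by blast
  ultimately have "P i j = 0" by linarith
  have "0 < (\<Sum>l\<in>UNIV. P i l)" and "0 < (\<Sum>k\<in>UNIV. P k j)"
    using P r_pos[of i] c_pos[of j] unfolding transport_polytope_def by simp_all
  then obtain k l where "0 < P i l" and "0 < P k j"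
    using sum_nonpos[of UNIV "P i"] sum_nonpos[of UNIV "\<lambda>k. P k j"] by (meson not_le)
  then have "0 < P i l * P k j * A i j * A k l" using A_pos by simp
  with cross[of i j k l] \<open>P i j = 0\<close> show False by (metis mult_zero_left less_irrefl)
qed

lemma cross_ratio_imp_diagonal_scaling:
  fixes P A :: "'d \<Rightarrow> 'h \<Rightarrow> real"
  assumes A_pos: "\<And>i j. 0 < A i j" and P_pos: "\<And>i j. 0 < P i j"
    and cross: "\<And>i j k l. P i j * P k l * A i l * A k j = P i l * P k j * A i j * A k l"
  obtains u v where "\<And>i. 0 < u i" and "\<And>j. 0 < v j" and "\<And>i j. P i j = u i * A i j * v j"
proof
  fix i0 :: 'd and j0 :: 'h
  define u where "u i = P i j0 / A i j0" for i
  define v where "v j = P i0 j * A i0 j0 / (A i0 j * P i0 j0)" for j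
  show "0 < u i" for i using A_pos P_pos by (simp add: u_def)
  show "0 < v j" for j using A_pos P_pos by (simp add: v_def)
  show "P i j = u i * A i j * v j" for i j
    using cross[of i j i0 j0] A_pos[of i j0] A_pos[of i0 j] P_pos[of i0 j0]
    by (simp add: u_def v_def field_simps)
qed

lemma xlnx_ge_mult_ln_sub:
  fixes p q :: real
  assumes "0 < p" and "0 \<le> q"
  shows "q * ln p + q - p \<le> (if q = 0 then 0 else q * ln q)"
proof (cases "q = 0")
  case True
  then show ?thesis using assms by simp
next
  case False
  with assms have "0 < q" by simp
  have "ln (p / q) \<le> p / q - 1" using assms \<open>0 < q\<close> by (intro ln_le_minus_one) simp
  then have "q * ln (p / q) \<le> q * (p / q - 1)" using \<open>0 < q\<close> by (simp add: mult_left_mono)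
  then show ?thesis using assms \<open>0 < q\<close> False by (simp add: ln_div algebra_simps)
qed

lemma frob_additive_cost:
  assumes "Q \<in> U r c"
  shows "frob (\<lambda>i j. a i + b j) Q = (\<Sum>i\<in>UNIV. a i * r i) + (\<Sum>j\<in>UNIV. b j * c j)"
proof -
  have "frob (\<lambda>i j. a i + b j) Q
      = (\<Sum>i\<in>UNIV. \<Sum>j\<in>UNIV. a i * Q i j) + (\<Sum>i\<in>UNIV. \<Sum>j\<in>UNIV. b j * Q i j)"
    unfolding frob_def by (simp add: distrib_right sum.distrib)
  also have "\<dots> = (\<Sum>i\<in>UNIV. a i * (\<Sum>j\<in>UNIV. Q i j)) + (\<Sum>j\<in>UNIV. b j * (\<Sum>i\<in>UNIV. Q i j))"
    by (subst (2) sum.swap) (simp add: sum_distrib_left)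
  finally show ?thesis using assms unfolding transport_polytope_def by simp
qed

lemma gibbs_plan_minimizes_entropic_cost:
  assumes P: "P \<in> U r c" and Q: "Q \<in> U r c"
    and gibbs: "\<And>i j. P i j = exp (a i + b j - C i j)"
  shows "frob C P - shannon_entropy P \<le> frob C Q - shannon_entropy Q"
proof -
  let ?G = "\<lambda>i j. (a i + 1) + b j"
  define xlnx :: "real \<Rightarrow> real" where "xlnx q = (if q = 0 then 0 else q * ln q)" for q
  have entropic_cost: "frob C R - shannon_entropy R = (\<Sum>i\<in>UNIV. \<Sum>j\<in>UNIV. C i j * R i j + xlnx (R i j))"
    for R :: "'a \<Rightarrow> 'b \<Rightarrow> real"
    by (simp add: frob_def shannon_entropy_def xlnx_def sum.distrib)
  have "?G i j * Q i j - ?G i j * P i j \<le> (C i j * Q i j + xlnx (Q i j)) - (C i j * P i j + xlnx (P i j))"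
    for i j
  proof -
    have "0 < P i j" and ln_P: "ln (P i j) = a i + b j - C i j" by (simp_all add: gibbs)
    then have "xlnx (P i j) = P i j * (a i + b j - C i j)" by (simp add: xlnx_def)
    moreover have "Q i j * (a i + b j - C i j) + Q i j - P i j \<le> xlnx (Q i j)"
      using Q \<open>0 < P i j\<close> unfolding xlnx_def ln_P[symmetric] transport_polytope_def
      by (intro xlnx_ge_mult_ln_sub) auto
    ultimately show ?thesis by (simp add: algebra_simps)
  qed
  then have "frob ?G Q - frob ?G P \<le> (frob C Q - shannon_entropy Q) - (frob C P - shannon_entropy P)"
    unfolding entropic_cost by (simp only: frob_def sum_subtractf[symmetric]) (intro sum_mono)
  moreover have "frob ?G Q = frob ?G P"
    using frob_additive_cost[OF P, of "\<lambda>i. a i + 1" b] frob_additive_cost[OF Q, of "\<lambda>i. a i + 1" b]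
    by simp
  ultimately show ?thesis by linarith
qed

lemma LIMSEQ_unique_const_subseq:
  fixes X :: "nat \<Rightarrow> 'a::t2_space" and \<sigma> :: "nat \<Rightarrow> nat"
  assumes "X \<longlonglongrightarrow> L" and "strict_mono \<sigma>" and "\<And>n. X (\<sigma> n) = a"
  shows "L = a"
proof -
  have "(X \<circ> \<sigma>) \<longlonglongrightarrow> L" using LIMSEQ_subseq_LIMSEQ[OF assms(1,2)] .
  moreover have "X \<circ> \<sigma> = (\<lambda>_. a)" using assms(3) by auto
  ultimately show ?thesis using LIMSEQ_unique tendsto_const by metis
qed

lemma sum_row_scale:
  assumes "(\<Sum>k\<in>UNIV. A i k) \<noteq> 0"
  shows "(\<Sum>j\<in>UNIV. row_scale r A i j) = r i"
  using assms by (simp add: row_scale_def sum_divide_distrib[symmetric] sum_distrib_right[symmetric])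

lemma sum_col_scale:
  assumes "(\<Sum>k\<in>UNIV. A k j) \<noteq> 0"
  shows "(\<Sum>i\<in>UNIV. col_scale c A i j) = c j"
  using assms by (simp add: col_scale_def sum_divide_distrib[symmetric] sum_distrib_right[symmetric])

locale sinkhorn_input =
  fixes r :: "'d::finite \<Rightarrow> real" and c :: "'h::finite \<Rightarrow> real" and A :: "'d \<Rightarrow> 'h \<Rightarrow> real"
  assumes r_pos: "\<And>i. 0 < r i" and c_pos: "\<And>j. 0 < c j"
    and A_nonneg: "\<And>i j. 0 \<le> A i j"
    and A_row: "\<And>i. \<exists>j. 0 < A i j" and A_col: "\<And>j. \<exists>i. 0 < A i j"
begin

lemma sum_diagonal_scaling_row_pos:
  assumes "\<And>i. 0 < u i" and "\<And>j. 0 < v j"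
  shows "0 < (\<Sum>j\<in>UNIV. u i * A i j * v j)"
proof -
  obtain j where "0 < A i j" using A_row by blast
  moreover have "0 \<le> u i * A i k * v k" for k
    using assms A_nonneg by (simp add: less_imp_le)
  ultimately show ?thesis using assms by (intro sum_pos2[of UNIV j]) simp_all
qed

lemma sum_diagonal_scaling_col_pos:
  assumes "\<And>i. 0 < u i" and "\<And>j. 0 < v j"
  shows "0 < (\<Sum>i\<in>UNIV. u i * A i j * v j)"
proof -
  obtain i where "0 < A i j" using A_col by blast
  moreover have "0 \<le> u k * A k j * v j" for k
    using assms A_nonneg by (simp add: less_imp_le)
  ultimately show ?thesis using assms by (intro sum_pos2[of UNIV i]) simp_all
qed

lemma sinkhorn_seq_diagonal_scaling:
  "\<exists>u v. (\<forall>i. 0 < u i) \<and> (\<forall>j. 0 < v j) \<and> (\<forall>i j. sinkhorn_seq r c A n i j = u i * A i j * v j)"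
proof (induction n)
  case 0
  show ?case by (intro exI[of _ "\<lambda>_. 1"]) simp
next
  case (Suc n)
  then obtain u v where u: "\<forall>i. 0 < u i" and v: "\<forall>j. 0 < v j"
    and S: "\<forall>i j. sinkhorn_seq r c A n i j = u i * A i j * v j"
    by blast
  show ?case
  proof (cases "even n")
    case True
    define u' where "u' i = u i * r i / (\<Sum>j\<in>UNIV. u i * A i j * v j)" for i
    have "sinkhorn_seq r c A (Suc n) i j = u' i * A i j * v j" for i j
      using True S by (simp add: row_scale_def u'_def)
    moreover have "0 < u' i" for i
      using u v r_pos sum_diagonal_scaling_row_pos unfolding u'_def by simp
    ultimately show ?thesis using v by blast
  next
    case False
    define v' where "v' j = v j * c j / (\<Sum>i\<in>UNIV. u i * A i j * v j)" for j
    have "sinkhorn_seq r c A (Suc n) i j = u i * A i j * v' j" for i j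
      using False S by (simp add: col_scale_def v'_def)
    moreover have "0 < v' j" for j
      using u v c_pos sum_diagonal_scaling_col_pos unfolding v'_def by simp
    ultimately show ?thesis using u by blast
  qed
qed

lemma sinkhorn_seq_nonneg: "0 \<le> sinkhorn_seq r c A n i j"
  using sinkhorn_seq_diagonal_scaling[of n] A_nonneg by (metis less_imp_le mult_nonneg_nonneg)

lemma sinkhorn_seq_row_sum_pos: "0 < (\<Sum>j\<in>UNIV. sinkhorn_seq r c A n i j)"
  using sinkhorn_seq_diagonal_scaling[of n] sum_diagonal_scaling_row_pos by auto

lemma sinkhorn_seq_col_sum_pos: "0 < (\<Sum>i\<in>UNIV. sinkhorn_seq r c A n i j)"
  using sinkhorn_seq_diagonal_scaling[of n] sum_diagonal_scaling_col_pos by auto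

lemma sinkhorn_limit_in_transport_polytope:
  assumes "sinkhorn_converges_to r c A P"
  shows "P \<in> U r c"
proof -
  have lim: "(\<lambda>n. sinkhorn_seq r c A n i j) \<longlonglongrightarrow> P i j" for i j
    using assms unfolding sinkhorn_converges_to_def by blast
  have "0 \<le> P i j" for i j
    by (rule LIMSEQ_le_const[OF lim]) (simp add: sinkhorn_seq_nonneg)
  moreover have "(\<Sum>j\<in>UNIV. P i j) = r i" for i
  proof (rule LIMSEQ_unique_const_subseq)
    show "(\<lambda>n. \<Sum>j\<in>UNIV. sinkhorn_seq r c A n i j) \<longlonglongrightarrow> (\<Sum>j\<in>UNIV. P i j)"
      by (intro tendsto_sum lim)
    show "strict_mono (\<lambda>n. Suc (2 * n))" by (simp add: strict_mono_def)
    show "(\<Sum>j\<in>UNIV. sinkhorn_seq r c A (Suc (2 * n)) i j) = r i" for n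
      using sum_row_scale[of "sinkhorn_seq r c A (2 * n)" i r] sinkhorn_seq_row_sum_pos[of "2 * n" i]
      by simp
  qed
  moreover have "(\<Sum>i\<in>UNIV. P i j) = c j" for j
  proof (rule LIMSEQ_unique_const_subseq)
    show "(\<lambda>n. \<Sum>i\<in>UNIV. sinkhorn_seq r c A n i j) \<longlonglongrightarrow> (\<Sum>i\<in>UNIV. P i j)"
      by (intro tendsto_sum lim)
    show "strict_mono (\<lambda>n. Suc (Suc (2 * n)))" by (simp add: strict_mono_def)
    show "(\<Sum>i\<in>UNIV. sinkhorn_seq r c A (Suc (Suc (2 * n))) i j) = c j" for n
      using sum_col_scale[of "sinkhorn_seq r c A (Suc (2 * n))" j c] sinkhorn_seq_col_sum_pos[of "Suc (2 * n)" j]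
      by simp
  qed
  ultimately show ?thesis unfolding transport_polytope_def by blast
qed

lemma sinkhorn_limit_cross_ratio:
  assumes "sinkhorn_converges_to r c A P"
  shows "P i j * P k l * A i l * A k j = P i l * P k j * A i j * A k l"
proof -
  let ?S = "sinkhorn_seq r c A"
  have lim: "(\<lambda>n. ?S n i j) \<longlonglongrightarrow> P i j" for i j
    using assms unfolding sinkhorn_converges_to_def by blast
  have "?S n i j * ?S n k l * A i l * A k j = ?S n i l * ?S n k j * A i j * A k l" for n
    using sinkhorn_seq_diagonal_scaling[of n] by (auto simp: algebra_simps)
  moreover have "(\<lambda>n. ?S n i j * ?S n k l * A i l * A k j) \<longlonglongrightarrow> P i j * P k l * A i l * A k j"
    and "(\<lambda>n. ?S n i l * ?S n k j * A i j * A k l) \<longlonglongrightarrow> P i l * P k j * A i j * A k l"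
    by (intro tendsto_intros lim)+
  ultimately show ?thesis using LIMSEQ_unique by simp
qed

lemma sinkhorn_limit_minimizes_entropic_cost:
  assumes A_pos: "\<And>i j. 0 < A i j" and conv: "sinkhorn_converges_to r c A P" and Q: "Q \<in> U r c"
  shows "frob (\<lambda>i j. - ln (A i j)) P - shannon_entropy P
           \<le> frob (\<lambda>i j. - ln (A i j)) Q - shannon_entropy Q"
proof -
  have PU: "P \<in> U r c" by (rule sinkhorn_limit_in_transport_polytope[OF conv])
  have cross: "P i j * P k l * A i l * A k j = P i l * P k j * A i j * A k l" for i j k l
    by (rule sinkhorn_limit_cross_ratio[OF conv])
  have P_pos: "0 < P i j" for i j
    by (rule transport_plan_pos_if_cross_ratio[OF PU r_pos c_pos A_pos cross])
  obtain u v where "\<And>i. 0 < u i" and "\<And>j. 0 < v j" and "\<And>i j. P i j = u i * A i j * v j"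
    using cross_ratio_imp_diagonal_scaling[of A P] A_pos P_pos cross by blast
  then have "P i j = exp (ln (u i) + ln (v j) - - ln (A i j))" for i j
    using A_pos by (simp add: exp_add)
  then show ?thesis by (rule gibbs_plan_minimizes_entropic_cost[OF PU Q])
qed

end

lemma sinkhorn_input_row_normalized:
  fixes M :: "'d::finite \<Rightarrow> 'h::finite \<Rightarrow> real"
  assumes M_nonneg: "\<And>i j. 0 \<le> M i j"
    and M_rows: "\<And>i. \<exists>j. M i j \<noteq> 0" and M_cols: "\<And>j. \<exists>i. M i j \<noteq> 0"
    and r_pos: "\<And>i. 0 < r i" and c_pos: "\<And>j. 0 < c j"
  shows "sinkhorn_input r c (\<lambda>i j. r i * M i j / (\<Sum>k\<in>UNIV. M i k))"
proof
  have M_pos_iff: "0 < M i j \<longleftrightarrow> M i j \<noteq> 0" for i j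
    using M_nonneg by (auto simp: less_le)
  have M_row_sum_pos: "0 < (\<Sum>k\<in>UNIV. M i k)" for i
  proof -
    obtain j where "0 < M i j" using M_rows M_pos_iff by blast
    then show ?thesis using M_nonneg by (intro sum_pos2[of UNIV j]) simp_all
  qed
  have entry_pos_iff: "0 < r i * M i j / (\<Sum>k\<in>UNIV. M i k) \<longleftrightarrow> M i j \<noteq> 0" for i j
    using r_pos[of i] M_row_sum_pos[of i] M_pos_iff
    by (auto simp: zero_less_mult_iff zero_less_divide_iff)
  show "0 \<le> r i * M i j / (\<Sum>k\<in>UNIV. M i k)" for i j
    using r_pos[of i] M_nonneg[of i j] M_row_sum_pos[of i] by simp
  show "\<exists>j. 0 < r i * M i j / (\<Sum>k\<in>UNIV. M i k)" for i using M_rows entry_pos_iff by blast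
  show "\<exists>i. 0 < r i * M i j / (\<Sum>k\<in>UNIV. M i k)" for j using M_cols entry_pos_iff by blast
qed (use r_pos c_pos in simp_all)

theorem proposition3:
  fixes M :: "'d::finite \<Rightarrow> 'h::finite \<Rightarrow> real"
    and r :: "'d \<Rightarrow> real" and c :: "'h \<Rightarrow> real"
    and P :: "'d \<Rightarrow> 'h \<Rightarrow> real"
  assumes M_nonneg: "\<forall>i j. M i j \<ge> 0"
    and M_rows: "\<forall>i. \<exists>j. M i j \<noteq> 0"
    and M_cols: "\<forall>j. \<exists>i. M i j \<noteq> 0"
    and r_pos: "\<forall>i. r i > 0" and r_sum: "(\<Sum>i\<in>UNIV. r i) = 1"
    and c_pos: "\<forall>j. c j > 0" and c_sum: "(\<Sum>j\<in>UNIV. c j) = 1"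
    and conv: "sinkhorn_converges_to r c (\<lambda>i j. r i * M i j / (\<Sum>k\<in>UNIV. M i k)) P"
  shows "(let Tstar = (\<lambda>i j. P i j / c j); Lstar = (\<lambda>j i. P i j / r i) in
            \<forall>i j. Lstar j i = Tstar i j * c j / (\<Sum>k\<in>UNIV. Tstar i k * c k)
                \<and> Tstar i j = Lstar j i * r i / (\<Sum>k\<in>UNIV. Lstar j k * r k))
       \<and> ((\<forall>i j. M i j > 0) \<longrightarrow>
           (let C = (\<lambda>i j. - ln (M i j / (\<Sum>k\<in>UNIV. M i k)) - ln (r i)) in
             P \<in> U r c \<and>
             (\<forall>P'\<in>U r c. frob C P - shannon_entropy P \<le> frob C P' - shannon_entropy P')))"
proof -
  let ?K = "\<lambda>i j. r i * M i j / (\<Sum>k\<in>UNIV. M i k)"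
  interpret K: sinkhorn_input r c ?K
    using M_nonneg M_rows M_cols r_pos c_pos by (intro sinkhorn_input_row_normalized) auto
  have PU: "P \<in> U r c" by (rule K.sinkhorn_limit_in_transport_polytope[OF conv])
  moreover have "P i j / r i = P i j / c j * c j / (\<Sum>k\<in>UNIV. P i k / c k * c k)"
    and "P i j / c j = P i j / r i * r i / (\<Sum>k\<in>UNIV. P k j / r k * r k)" for i j
    by (rule transport_plan_cooperative_inference[OF PU r_pos[rule_format] c_pos[rule_format]])+
  moreover have "frob C P - shannon_entropy P \<le> frob C Q - shannon_entropy Q"
    if M_pos: "\<forall>i j. 0 < M i j" and C_def: "C = (\<lambda>i j. - ln (M i j / (\<Sum>k\<in>UNIV. M i k)) - ln (r i))"
      and Q: "Q \<in> U r c" for C Q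
  proof -
    have M_row_sum_pos: "0 < (\<Sum>k\<in>UNIV. M i k)" for i
      using M_pos by (simp add: sum_pos)
    have K_pos: "0 < ?K i j" for i j
      using r_pos M_pos M_row_sum_pos[of i] by simp
    have "- ln (M i j / (\<Sum>k\<in>UNIV. M i k)) - ln (r i) = - ln (?K i j)" for i j
      using r_pos M_pos M_row_sum_pos[of i] by (simp add: ln_mult_pos flip: times_divide_eq_right)
    then have "C = (\<lambda>i j. - ln (?K i j))" unfolding C_def by simp
    then show ?thesis using K.sinkhorn_limit_minimizes_entropic_cost[OF K_pos conv Q] by simp
  qed
  ultimately show ?thesis unfolding Let_def by blast
qed

end
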